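(* Suppose the arms are played in a round-robin manner as described in the context. Then the event $G$ holds with probability at least $1-3/T^2$.
   Context: Delay-as-payoff bandit: $K$ arms, horizon $T$, maximum delay $D\in\mathbb{N}$. Arm $i$ has an unknown distribution $\mathcal{D}_i$ on $\{0,1,\dots,D\}$; at each step $t$ the agent picks $i_t$, a delay $d_t\sim\mathcal{D}_{i_t}$ is drawn independently and revealed only at time $t+d_t$, and the payoff is $d_t/D$. Let $\mu(i)=\mathbb{E}_{X\sim\mathcal{D}_i}[X/D]$ and $d(i)=D\mu(i)$. Playing in a round-robin manner means: time is divided into rounds, in each round every arm of the current active set is played exactly once, and the active set can only shrink over time; $R_t$ denotes the minimum size of the active set used up to time $t$. Notation: $n_t(i)$ is the number of steps $s\le t$ with $i_s=i$; $\hat\mu_t(i)=\frac{1}{n_t(i)}\sum_{s\le t,\,i_s=i}d_s/D$ (empirical mean payoff of all plays of $i$ up to $t$, possibly not yet observed); $m_t(i)=|\{s\le t: i_s=i,\ s+d_s\ge t\}|$. Event $G$: for every $t\in[T]$ and $i\in[K]$, $m_t(i)\le\frac{2d(i)}{R_t}+16\log T+2$ and $|\mu(i)-\hat\mu_t(i)|\le\sqrt{2\log T/n_t(i)}$. *)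

theory Defs
  imports "HOL-Probability.Probability"
begin

text \<open>Outcome space ("stack of delays"): w (i, k) is the delay of the k-th play (k = 0, 1, ...)
  of arm i.  Arms are 0..K-1, time steps are 1..T.  A policy is a function
  arm :: outcome => time => arm.\<close>

type_synonym outcome = "nat \<times> nat \<Rightarrow> nat"

definition delay_space :: "nat \<Rightarrow> nat \<Rightarrow> (nat \<Rightarrow> nat pmf) \<Rightarrow> outcome pmf" where
  "delay_space K T Dd = Pi_pmf ({..<K} \<times> {..<T}) 0 (\<lambda>(i,k). Dd i)"

definition cnt :: "(outcome \<Rightarrow> nat \<Rightarrow> nat) \<Rightarrow> outcome \<Rightarrow> nat \<Rightarrow> nat \<Rightarrow> nat" where
  "cnt arm w t i = card {s \<in> {1..t}. arm w s = i}"

text \<open>d_s: the delay drawn at step s (the next unused sample of the chosen arm).\<close>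
definition dly :: "(outcome \<Rightarrow> nat \<Rightarrow> nat) \<Rightarrow> outcome \<Rightarrow> nat \<Rightarrow> nat" where
  "dly arm w s = w (arm w s, cnt arm w (s - 1) (arm w s))"

text \<open>Two outcomes are indistinguishable to the agent before choosing at time t:
  same arms played at all s < t, and same revealed feedback (delay of s revealed at s + d_s).\<close>
definition hist_eq :: "(outcome \<Rightarrow> nat \<Rightarrow> nat) \<Rightarrow> nat \<Rightarrow> outcome \<Rightarrow> outcome \<Rightarrow> bool" where
  "hist_eq arm t w w' \<longleftrightarrow> (\<forall>s\<in>{1..<t}. arm w s = arm w' s \<and>
      (s + dly arm w s < t \<longleftrightarrow> s + dly arm w' s < t) \<and>
      (s + dly arm w s < t \<longrightarrow> dly arm w s = dly arm w' s))"

text \<open>The arm choices and the active sets are non-anticipating (functions of the observed history).\<close>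
definition round_robin ::
  "nat \<Rightarrow> nat \<Rightarrow> (outcome \<Rightarrow> nat \<Rightarrow> nat) \<Rightarrow> (outcome \<Rightarrow> nat \<Rightarrow> nat set) \<Rightarrow> (outcome \<Rightarrow> nat \<Rightarrow> nat) \<Rightarrow> bool"
  where
  "round_robin K T arm act bnd \<longleftrightarrow>
     (\<forall>w. bnd w 0 = 0 \<and> act w 0 \<subseteq> {..<K} \<and>
        (\<forall>r. act w r \<noteq> {} \<and> act w (Suc r) \<subseteq> act w r \<and> bnd w (Suc r) = bnd w r + card (act w r)) \<and>
        (\<forall>r. \<forall>t\<in>{bnd w r<..bnd w (Suc r)}. t \<le> T \<longrightarrow> arm w t \<in> act w r) \<and>
        (\<forall>r. inj_on (arm w) ({bnd w r<..bnd w (Suc r)} \<inter> {..T}))) \<and>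
     (\<forall>t\<in>{1..T}. \<forall>w w'. hist_eq arm t w w' \<longrightarrow> arm w t = arm w' t) \<and>
     (\<forall>r w w'. bnd w r < T \<longrightarrow> hist_eq arm (bnd w r + 1) w w' \<longrightarrow> act w r = act w' r)"

definition Rmin :: "(outcome \<Rightarrow> nat \<Rightarrow> nat set) \<Rightarrow> (outcome \<Rightarrow> nat \<Rightarrow> nat) \<Rightarrow> outcome \<Rightarrow> nat \<Rightarrow> nat" where
  "Rmin act bnd w t = Min ((\<lambda>r. card (act w r)) ` {r. bnd w r < t})"

definition mu :: "nat \<Rightarrow> (nat \<Rightarrow> nat pmf) \<Rightarrow> nat \<Rightarrow> real" where
  "mu D Dd i = measure_pmf.expectation (Dd i) (\<lambda>x. real x / real D)"

definition dmean :: "nat \<Rightarrow> (nat \<Rightarrow> nat pmf) \<Rightarrow> nat \<Rightarrow> real" where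
  "dmean D Dd i = real D * mu D Dd i"

text \<open>Empirical mean payoff of all plays of i up to t (observed or not).\<close>
definition muhat :: "nat \<Rightarrow> (outcome \<Rightarrow> nat \<Rightarrow> nat) \<Rightarrow> outcome \<Rightarrow> nat \<Rightarrow> nat \<Rightarrow> real" where
  "muhat D arm w t i =
     (\<Sum>s\<in>{s \<in> {1..t}. arm w s = i}. real (dly arm w s) / real D) / real (cnt arm w t i)"

definition mcnt :: "(outcome \<Rightarrow> nat \<Rightarrow> nat) \<Rightarrow> outcome \<Rightarrow> nat \<Rightarrow> nat \<Rightarrow> nat" where
  "mcnt arm w t i = card {s \<in> {1..t}. arm w s = i \<and> s + dly arm w s \<ge> t}"

text \<open>The good event G (the concentration bound is only required when n_t(i) > 0,
  the bound being vacuous/infinite otherwise).\<close>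
definition good_event ::
  "nat \<Rightarrow> nat \<Rightarrow> nat \<Rightarrow> (nat \<Rightarrow> nat pmf) \<Rightarrow> (outcome \<Rightarrow> nat \<Rightarrow> nat) \<Rightarrow> (outcome \<Rightarrow> nat \<Rightarrow> nat set)
     \<Rightarrow> (outcome \<Rightarrow> nat \<Rightarrow> nat) \<Rightarrow> outcome set" where
  "good_event K T D Dd arm act bnd =
     {w. \<forall>t\<in>{1..T}. \<forall>i<K.
        real (mcnt arm w t i) \<le> 2 * dmean D Dd i / real (Rmin act bnd w t) + 16 * ln (real T) + 2 \<and>
        (cnt arm w t i > 0 \<longrightarrow>
           \<bar>mu D Dd i - muhat D arm w t i\<bar> \<le> sqrt (2 * ln (real T) / real (cnt arm w t i)))}"

end

theory Submission
  imports Defs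
begin

text \<open>Under round-robin play the k-th play of arm i happens in round k, so it consumes the
  independent sample w (i, k), and the empirical mean after n plays is a mean of n independent
  samples of D_i: Hoeffding's inequality bounds its deviation. A play of round k that is still
  outstanding in round r \<ge> k + 2 has waited through r - k - 1 full rounds of at least R_t steps
  each, so its delay exceeds (r - k - 1) R_t; the number of such rounds has mean at most d(i)/R_t
  and a Chernoff-type tail. A union bound over the at most T^2 pairs (arm, count) and T^3 triples
  (arm, round, R_t) costs 2/T^2 + 1/T^2. When there are at least T arms, the horizon ends within
  the first round and G holds surely.\<close>

definition round_of :: "(outcome \<Rightarrow> nat \<Rightarrow> nat) \<Rightarrow> outcome \<Rightarrow> nat \<Rightarrow> nat" where
  "round_of bnd w s = (LEAST r. s \<le> bnd w (Suc r))"

definition late_rounds :: "nat \<Rightarrow> nat \<Rightarrow> nat \<Rightarrow> (nat \<Rightarrow> nat) \<Rightarrow> nat set" where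
  "late_rounds T r R v = {k \<in> {..<T}. k + 2 \<le> r \<and> (r - Suc k) * R < v k}"

locale round_robin_policy =
  fixes K T :: nat
    and arm :: "outcome \<Rightarrow> nat \<Rightarrow> nat"
    and act :: "outcome \<Rightarrow> nat \<Rightarrow> nat set"
    and bnd :: "outcome \<Rightarrow> nat \<Rightarrow> nat"
  assumes round_robin: "round_robin K T arm act bnd"
begin

lemma bnd_0: "bnd w 0 = 0"
  using round_robin unfolding round_robin_def by blast

lemma act_0_subset: "act w 0 \<subseteq> {..<K}"
  using round_robin unfolding round_robin_def by blast

lemma act_nonempty: "act w r \<noteq> {}"
  using round_robin unfolding round_robin_def by blast

lemma act_Suc_subset: "act w (Suc r) \<subseteq> act w r"
  using round_robin unfolding round_robin_def by blast

lemma bnd_Suc: "bnd w (Suc r) = bnd w r + card (act w r)"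
  using round_robin unfolding round_robin_def by blast

lemma arm_in_act:
  assumes "bnd w r < t" and "t \<le> bnd w (Suc r)" and "t \<le> T"
  shows "arm w t \<in> act w r"
proof -
  have "\<forall>t\<in>{bnd w r<..bnd w (Suc r)}. t \<le> T \<longrightarrow> arm w t \<in> act w r"
    using round_robin unfolding round_robin_def by blast
  then show ?thesis using assms by simp
qed

lemma inj_on_arm_round: "inj_on (arm w) ({bnd w r<..bnd w (Suc r)} \<inter> {..T})"
  using round_robin unfolding round_robin_def by blast

lemma act_0_eq:
  assumes "T \<ge> 1"
  shows "act w 0 = act w' 0"
proof -
  have "\<forall>r w w'. bnd w r < T \<longrightarrow> hist_eq arm (bnd w r + 1) w w' \<longrightarrow> act w r = act w' r"
    using round_robin unfolding round_robin_def by blast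
  moreover have "hist_eq arm (bnd w 0 + 1) w w'"
    unfolding hist_eq_def bnd_0 by simp
  ultimately show ?thesis
    using assms bnd_0[of w] by simp
qed

lemma act_antimono: "r \<le> r' \<Longrightarrow> act w r' \<subseteq> act w r"
  by (induction r' rule: dec_induct) (use act_Suc_subset in blast)+

lemma finite_act: "finite (act w r)"
  using act_antimono[of 0 r w] act_0_subset[of w] by (meson finite_lessThan finite_subset le0)

lemma card_act_pos: "card (act w r) > 0"
  using finite_act act_nonempty by (simp add: card_gt_0_iff)

lemma strict_mono_bnd: "strict_mono (bnd w)"
  using bnd_Suc card_act_pos by (intro strict_monoI_Suc) simp

lemma bnd_mono: "r \<le> r' \<Longrightarrow> bnd w r \<le> bnd w r'"
  using strict_mono_bnd strict_mono_less_eq by blast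

lemma le_bnd: "r \<le> bnd w r"
  using strict_mono_bnd strict_mono_imp_increasing by blast

lemma bnd_add_mult_le:
  assumes "r \<le> r'" and "\<And>j. r \<le> j \<Longrightarrow> j < r' \<Longrightarrow> R \<le> card (act w j)"
  shows "bnd w r + (r' - r) * R \<le> bnd w r'"
  using assms
proof (induction r' rule: dec_induct)
  case (step n)
  then have "bnd w r + (n - r) * R \<le> bnd w n" and "R \<le> card (act w n)" by simp_all
  moreover have "(Suc n - r) * R = R + (n - r) * R"
    using step(1) by (simp add: Suc_diff_le)
  ultimately show ?case using bnd_Suc[of w n] by linarith
qed simp

lemma round_of_bounds:
  assumes "1 \<le> s"
  shows "bnd w (round_of bnd w s) < s" and "s \<le> bnd w (Suc (round_of bnd w s))"
proof -
  show "s \<le> bnd w (Suc (round_of bnd w s))"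
    unfolding round_of_def by (rule LeastI[of _ s]) (use le_bnd[of "Suc s" w] in simp)
  show "bnd w (round_of bnd w s) < s"
  proof (cases "round_of bnd w s")
    case 0
    then show ?thesis using assms bnd_0 by simp
  next
    case (Suc q)
    then have "q < round_of bnd w s" by simp
    then have "\<not> s \<le> bnd w (Suc q)"
      unfolding round_of_def by (rule not_less_Least)
    then show ?thesis using Suc by simp
  qed
qed

lemma round_of_eqI:
  assumes "bnd w r < s" and "s \<le> bnd w (Suc r)"
  shows "round_of bnd w s = r"
proof -
  have "1 \<le> s" using assms by simp
  note bounds = round_of_bounds[OF this, of w]
  show ?thesis
  proof (rule linorder_cases[of "round_of bnd w s" r])
    assume "round_of bnd w s < r"
    then have "bnd w (Suc (round_of bnd w s)) \<le> bnd w r" by (intro bnd_mono) simp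
    then show ?thesis using bounds assms by simp
  next
    assume "r < round_of bnd w s"
    then have "bnd w (Suc r) \<le> bnd w (round_of bnd w s)" by (intro bnd_mono) simp
    then show ?thesis using bounds assms by simp
  qed
qed

lemma round_of_mono:
  assumes "1 \<le> s" and "s \<le> s'"
  shows "round_of bnd w s \<le> round_of bnd w s'"
proof (rule ccontr)
  assume "\<not> ?thesis"
  then have "bnd w (Suc (round_of bnd w s')) \<le> bnd w (round_of bnd w s)"
    by (intro bnd_mono) simp
  then show False using round_of_bounds[of s w] round_of_bounds[of s' w] assms by simp
qed

lemma round_of_less: "1 \<le> t \<Longrightarrow> round_of bnd w t < t"
  using round_of_bounds(1)[of t w] le_bnd[of "round_of bnd w t" w] by simp

lemma arm_in_act_round_of:
  assumes "s \<in> {1..T}"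
  shows "arm w s \<in> act w (round_of bnd w s)"
  using assms round_of_bounds[of s w] by (intro arm_in_act) auto

lemma arm_in_act_0: "s \<in> {1..T} \<Longrightarrow> arm w s \<in> act w 0"
  using arm_in_act_round_of act_antimono[of 0] by blast

lemma inj_on_round_of_plays: "inj_on (round_of bnd w) {s \<in> {1..T}. arm w s = i}"
proof (rule inj_onI)
  fix s s' assume s: "s \<in> {s \<in> {1..T}. arm w s = i}" and s': "s' \<in> {s \<in> {1..T}. arm w s = i}"
    and eq: "round_of bnd w s = round_of bnd w s'"
  let ?r = "round_of bnd w s"
  have "s \<in> {bnd w ?r<..bnd w (Suc ?r)} \<inter> {..T}" "s' \<in> {bnd w ?r<..bnd w (Suc ?r)} \<inter> {..T}"
    using round_of_bounds[of s w] round_of_bounds[of s' w] s s' eq by auto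
  then show "s = s'" using inj_on_arm_round[of w ?r] s s' by (auto dest: inj_onD)
qed

lemma arm_image_round:
  assumes "bnd w (Suc r) \<le> T"
  shows "arm w ` {bnd w r<..bnd w (Suc r)} = act w r"
proof (rule card_subset_eq)
  show "finite (act w r)" by (rule finite_act)
  show "arm w ` {bnd w r<..bnd w (Suc r)} \<subseteq> act w r"
    using assms by (auto intro!: arm_in_act)
  have "inj_on (arm w) {bnd w r<..bnd w (Suc r)}"
    using inj_on_arm_round[of w r] assms by (simp add: Int_absorb2 subset_eq)
  then show "card (arm w ` {bnd w r<..bnd w (Suc r)}) = card (act w r)"
    using bnd_Suc[of w r] by (simp add: card_image)
qed

lemma round_of_earlier_plays:
  assumes s: "s \<in> {1..T}"
  shows "round_of bnd w ` {s' \<in> {1..s - 1}. arm w s' = arm w s} = {..<round_of bnd w s}"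
proof (intro equalityI subsetI)
  fix j assume "j \<in> round_of bnd w ` {s' \<in> {1..s - 1}. arm w s' = arm w s}"
  then obtain s' where s': "s' \<in> {1..s - 1}" "arm w s' = arm w s" and j: "j = round_of bnd w s'"
    by blast
  have "j \<le> round_of bnd w s"
    unfolding j using s' by (intro round_of_mono) auto
  moreover have "j \<noteq> round_of bnd w s"
  proof
    assume "j = round_of bnd w s"
    then have "s' = s"
      using inj_on_round_of_plays[of w "arm w s"] s s' j by (auto dest: inj_onD)
    then show False using s' by auto
  qed
  ultimately show "j \<in> {..<round_of bnd w s}" by simp
next
  fix j assume j: "j \<in> {..<round_of bnd w s}"
  have before: "bnd w (Suc j) < s"
    using bnd_mono[of "Suc j" "round_of bnd w s" w] round_of_bounds(1)[of s w] j s by simp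
  have "arm w s \<in> act w j"
    using arm_in_act_round_of[OF s, of w] act_antimono[of j "round_of bnd w s" w] j by auto
  moreover have "bnd w (Suc j) \<le> T"
    using before s by simp
  ultimately have "arm w s \<in> arm w ` {bnd w j<..bnd w (Suc j)}"
    using arm_image_round by blast
  then obtain s' where s': "s' \<in> {bnd w j<..bnd w (Suc j)}" "arm w s' = arm w s"
    by (metis imageE)
  have "j = round_of bnd w s'"
    using s'(1) by (intro round_of_eqI[symmetric]) auto
  moreover have "s' \<in> {s' \<in> {1..s - 1}. arm w s' = arm w s}"
    using s' before by auto
  ultimately show "j \<in> round_of bnd w ` {s' \<in> {1..s - 1}. arm w s' = arm w s}" by blast
qed

lemma cnt_eq_round_of:
  assumes "s \<in> {1..T}"
  shows "cnt arm w (s - 1) (arm w s) = round_of bnd w s"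
proof -
  have "inj_on (round_of bnd w) {s' \<in> {1..s - 1}. arm w s' = arm w s}"
    by (rule inj_on_subset[OF inj_on_round_of_plays]) (use assms in auto)
  then have "card {s' \<in> {1..s - 1}. arm w s' = arm w s} = card {..<round_of bnd w s}"
    using card_image round_of_earlier_plays[OF assms, of w] by fastforce
  then show ?thesis
    unfolding cnt_def by simp
qed

lemma dly_eq_round_of:
  assumes "s \<in> {1..T}"
  shows "dly arm w s = w (arm w s, round_of bnd w s)"
  unfolding dly_def cnt_eq_round_of[OF assms] ..

lemma finite_rounds_started: "finite {r. bnd w r < t}"
  by (rule finite_subset[of _ "{..<t}"]) (use le_bnd in \<open>auto intro: le_less_trans\<close>)

lemma Rmin_le_card_act: "bnd w r < t \<Longrightarrow> Rmin act bnd w t \<le> card (act w r)"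
  unfolding Rmin_def using finite_rounds_started by (intro Min_le) auto

lemma Rmin_pos:
  assumes "1 \<le> t"
  shows "1 \<le> Rmin act bnd w t"
proof -
  have "0 \<in> {r. bnd w r < t}" using assms bnd_0 by simp
  then have "Rmin act bnd w t \<in> (\<lambda>r. card (act w r)) ` {r. bnd w r < t}"
    unfolding Rmin_def using finite_rounds_started by (intro Min_in) auto
  then show ?thesis using card_act_pos by (auto simp: Suc_le_eq)
qed

lemma outstanding_play_in_late_rounds:
  assumes s: "s \<in> {1..t}" and t: "t \<in> {1..T}" and pending: "t \<le> s + dly arm w s"
    and early: "round_of bnd w s + 2 \<le> round_of bnd w t"
  shows "round_of bnd w s
    \<in> late_rounds T (round_of bnd w t) (Rmin act bnd w t) (\<lambda>k. w (arm w s, k))"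
proof -
  let ?k = "round_of bnd w s" and ?r = "round_of bnd w t" and ?R = "Rmin act bnd w t"
  have started: "bnd w ?r < t" using round_of_bounds(1)[of t w] t by simp
  have "bnd w (Suc ?k) + (?r - Suc ?k) * ?R \<le> bnd w ?r"
  proof (rule bnd_add_mult_le)
    fix j assume "j < ?r"
    then have "bnd w j < t" using bnd_mono[of j ?r w] started by simp
    then show "?R \<le> card (act w j)" by (rule Rmin_le_card_act)
  qed (use early in simp)
  moreover have "s \<le> bnd w (Suc ?k)" using round_of_bounds(2)[of s w] s by simp
  moreover have "dly arm w s = w (arm w s, ?k)" using dly_eq_round_of s t by simp
  ultimately have "(?r - Suc ?k) * ?R < w (arm w s, ?k)" using started pending by linarith
  moreover have "?k < T" using early round_of_less[of t w] t by simp
  ultimately show ?thesis using early unfolding late_rounds_def by simp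
qed

text \<open>The outstanding plays of arm i at time t lie in distinct rounds; apart from the current and
  the previous round, each such round k has a delay exceeding the length of the rounds since.\<close>

lemma mcnt_le_late_rounds:
  assumes t: "t \<in> {1..T}"
  shows "mcnt arm w t i
    \<le> 2 + card (late_rounds T (round_of bnd w t) (Rmin act bnd w t) (\<lambda>k. w (i, k)))"
proof -
  let ?r = "round_of bnd w t"
  let ?L = "late_rounds T ?r (Rmin act bnd w t) (\<lambda>k. w (i, k))"
  define P where "P = {s \<in> {1..t}. arm w s = i \<and> s + dly arm w s \<ge> t}"
  have inj: "inj_on (round_of bnd w) P"
    by (rule inj_on_subset[OF inj_on_round_of_plays[of w i]]) (use t in \<open>auto simp: P_def\<close>)
  have "round_of bnd w ` P \<subseteq> {?r - 1, ?r} \<union> ?L"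
  proof
    fix k assume "k \<in> round_of bnd w ` P"
    then obtain s where s: "s \<in> P" and k: "k = round_of bnd w s" by blast
    have "k \<le> ?r" unfolding k using s t by (intro round_of_mono) (auto simp: P_def)
    moreover have "k \<in> ?L" if "k + 2 \<le> ?r"
      using outstanding_play_in_late_rounds[of s t w] s t that unfolding k P_def by auto
    ultimately show "k \<in> {?r - 1, ?r} \<union> ?L" by (cases "k + 2 \<le> ?r") auto
  qed
  then have "card (round_of bnd w ` P) \<le> card ({?r - 1, ?r} \<union> ?L)"
    by (rule card_mono[rotated]) (simp add: late_rounds_def)
  also have "\<dots> \<le> card {?r - 1, ?r} + card ?L"
    by (rule card_Un_le)
  also have "\<dots> \<le> 2 + card ?L"
    by (simp add: card_insert_le_m1)
  finally show ?thesis
    using card_image[OF inj] unfolding mcnt_def P_def by simp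
qed

lemma in_act_0_if_cnt_pos:
  assumes "t \<le> T" and "0 < cnt arm w t i"
  shows "i \<in> act w 0"
proof -
  have "{s \<in> {1..t}. arm w s = i} \<noteq> {}"
    using assms(2) unfolding cnt_def by (metis card.empty less_irrefl)
  then obtain s where "s \<in> {1..t}" and "arm w s = i" by blast
  then show ?thesis using arm_in_act_0[of s w] assms(1) by auto
qed

lemma mcnt_eq_0_if_not_in_act_0:
  assumes "t \<le> T" and "i \<notin> act w 0"
  shows "mcnt arm w t i = 0"
  using arm_in_act_0[of _ w] assms unfolding mcnt_def by fastforce

lemma round_of_eq_0_if_horizon_le_card_act_0:
  assumes "T \<le> card (act w 0)" and "t \<in> {1..T}"
  shows "round_of bnd w t = 0"
  using assms bnd_Suc[of w 0] bnd_0[of w] by (intro round_of_eqI) auto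

lemma cnt_le_1_if_horizon_le_card_act_0:
  assumes "T \<le> card (act w 0)" and "t \<le> T"
  shows "cnt arm w t i \<le> 1"
proof -
  let ?Q = "{s \<in> {1..t}. arm w s = i}"
  have "inj_on (round_of bnd w) ?Q"
    by (rule inj_on_subset[OF inj_on_round_of_plays[of w i]]) (use assms in auto)
  moreover have "round_of bnd w ` ?Q \<subseteq> {0}"
    using round_of_eq_0_if_horizon_le_card_act_0[OF assms(1)] assms(2) by auto
  ultimately have "card ?Q \<le> card {0::nat}"
    by (metis card_image card_mono finite.emptyI finite.insertI)
  then show ?thesis unfolding cnt_def by simp
qed

end

lemma bij_betw_play_index:
  "bij_betw (\<lambda>s. cnt arm w (s - 1) i) {s \<in> {1..t}. arm w s = i} {..<cnt arm w t i}"
proof -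
  define Q where "Q = {s \<in> {1..t}. arm w s = i}"
  define idx where "idx s = cnt arm w (s - 1) i" for s
  have "idx s < idx s'" if "s \<in> Q" "s' \<in> Q" "s < s'" for s s'
  proof -
    have "{x \<in> {1..s - 1}. arm w x = i} \<subseteq> {x \<in> {1..s' - 1}. arm w x = i}"
      and "s \<in> {x \<in> {1..s' - 1}. arm w x = i} - {x \<in> {1..s - 1}. arm w x = i}"
      using that unfolding Q_def by auto
    then show ?thesis unfolding idx_def cnt_def by (intro psubset_card_mono) auto
  qed
  then have inj: "inj_on idx Q"
    by (intro inj_onI) (metis less_irrefl linorder_neqE_nat)
  have "idx s < card Q" if "s \<in> Q" for s
  proof -
    have "{x \<in> {1..s - 1}. arm w x = i} \<subseteq> Q" and "s \<in> Q - {x \<in> {1..s - 1}. arm w x = i}"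
      using that unfolding Q_def by auto
    then show ?thesis unfolding idx_def cnt_def by (intro psubset_card_mono) (auto simp: Q_def)
  qed
  then have "idx ` Q = {..<card Q}"
    using card_image[OF inj] by (intro card_subset_eq) auto
  with inj show ?thesis
    unfolding bij_betw_def idx_def Q_def cnt_def by simp
qed

text \<open>Whatever the policy, the k-th play of arm i consumes the sample w (i, k).\<close>

lemma muhat_eq_mean_of_first_samples:
  "muhat D arm w t i = (\<Sum>k<cnt arm w t i. real (w (i, k)) / real D) / real (cnt arm w t i)"
proof -
  have "(\<Sum>s\<in>{s \<in> {1..t}. arm w s = i}. real (dly arm w s) / real D)
      = (\<Sum>s\<in>{s \<in> {1..t}. arm w s = i}. real (w (i, cnt arm w (s - 1) i)) / real D)"
    by (intro sum.cong) (auto simp: dly_def)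
  also have "\<dots> = (\<Sum>k<cnt arm w t i. real (w (i, k)) / real D)"
    by (rule sum.reindex_bij_betw[OF bij_betw_play_index, of "\<lambda>k. real (w (i, k)) / real D"])
  finally show ?thesis unfolding muhat_def by simp
qed

lemma delay_space_sample_in_support:
  assumes "w \<in> set_pmf (delay_space K T Dd)" and "i < K" and "k < T"
  shows "w (i, k) \<in> set_pmf (Dd i)"
  using assms unfolding delay_space_def by (auto simp: set_Pi_pmf PiE_dflt_def)

lemma map_pmf_delay_space_sample:
  assumes "i < K" and "k < T"
  shows "map_pmf (\<lambda>w. w (i, k)) (delay_space K T Dd) = Dd i"
  using assms unfolding delay_space_def by (subst Pi_pmf_component) auto

lemma mu_nonneg: "0 \<le> mu D Dd i"
  unfolding mu_def by (intro Bochner_Integration.integral_nonneg_AE) auto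

lemma mu_le_1:
  assumes "set_pmf (Dd i) \<subseteq> {0..D}"
  shows "mu D Dd i \<le> 1"
proof -
  have bounded: "AE x in measure_pmf (Dd i). real x / real D \<le> 1"
  proof (rule AE_pmfI)
    fix x assume "x \<in> set_pmf (Dd i)"
    then have "real x \<le> real D" using assms by auto
    then show "real x / real D \<le> 1" by (cases "D = 0") (auto simp: divide_le_eq)
  qed
  have "mu D Dd i \<le> measure_pmf.expectation (Dd i) (\<lambda>_. 1::real)"
    unfolding mu_def
  proof (rule integral_mono_AE[OF _ _ bounded])
    show "integrable (measure_pmf (Dd i)) (\<lambda>x. real x / real D)"
      using bounded by (intro measure_pmf.integrable_const_bound[where B=1]) (auto elim!: AE_mp)
  qed simp
  then show ?thesis by simp
qed

lemma indep_vars_delay_space_samples: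
  assumes "I \<subseteq> {..<K} \<times> {..<T}"
  shows "prob_space.indep_vars (measure_pmf (delay_space K T Dd)) (\<lambda>_. borel)
    (\<lambda>x w. f x (w x) :: real) I"
proof -
  have "prob_space.indep_vars (measure_pmf (delay_space K T Dd)) (\<lambda>_. count_space UNIV) (\<lambda>x w. w x) I"
  proof (rule prob_space.indep_vars_subset[OF measure_pmf.prob_space_axioms _ assms])
    show "prob_space.indep_vars (measure_pmf (delay_space K T Dd)) (\<lambda>_. count_space UNIV)
        (\<lambda>x w. w x) ({..<K} \<times> {..<T})"
      unfolding delay_space_def by (rule indep_vars_Pi_pmf) simp
  qed
  then show ?thesis
    by (rule prob_space.indep_vars_compose2[OF measure_pmf.prob_space_axioms]) simp
qed

lemma prob_delay_space_sample_sum_deviation: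
  assumes i: "i < K" and n: "1 \<le> n" "n \<le> T" and supp: "set_pmf (Dd i) \<subseteq> {0..D}"
    and \<epsilon>: "0 \<le> \<epsilon>"
  shows "measure_pmf.prob (delay_space K T Dd)
           {w. \<epsilon> \<le> \<bar>(\<Sum>k<n. real (w (i, k)) / real D) - real n * mu D Dd i\<bar>}
         \<le> 2 * exp (-2 * \<epsilon>\<^sup>2 / real n)"
proof -
  let ?P = "delay_space K T Dd"
  let ?M = "measure_pmf ?P"
  define I where "I = (\<lambda>k. (i, k)) ` {..<n}"
  define X where "X x w = real (w x) / real D" for x :: "nat \<times> nat" and w :: outcome
  have inj: "inj_on (\<lambda>k. (i, k)) {..<n}" by (auto intro: inj_onI)
  have card_I: "card I = n" unfolding I_def using card_image[OF inj] by simp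
  have "I \<subseteq> {..<K} \<times> {..<T}" using i n unfolding I_def by auto
  then have indep: "prob_space.indep_vars ?M (\<lambda>_. borel) X I"
    unfolding X_def by (rule indep_vars_delay_space_samples)
  have expectation_X: "measure_pmf.expectation ?P (X x) = mu D Dd i" if "x \<in> I" for x
  proof -
    obtain k where k: "x = (i, k)" "k < n" using \<open>x \<in> I\<close> unfolding I_def by blast
    have "measure_pmf.expectation ?P (X x)
        = measure_pmf.expectation (map_pmf (\<lambda>w. w (i, k)) ?P) (\<lambda>v. real v / real D)"
      unfolding X_def k by simp
    then show ?thesis
      using map_pmf_delay_space_sample[of i K k T Dd] i k n unfolding mu_def by simp
  qed
  interpret H: Hoeffding_ineq ?M I X "\<lambda>_. 0" "\<lambda>_. 1" "\<Sum>x\<in>I. measure_pmf.expectation ?P (X x)"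
  proof unfold_locales
    fix x assume "x \<in> I"
    then obtain k where k: "x = (i, k)" "k < n" unfolding I_def by blast
    show "AE w in ?M. X x w \<in> {0..1}"
    proof (rule AE_pmfI)
      fix w assume "w \<in> set_pmf ?P"
      then have "w (i, k) \<in> {0..D}"
        using delay_space_sample_in_support[of w K T Dd i k] supp i k n by auto
      then show "X x w \<in> {0..1}" unfolding X_def k by (cases "D = 0") auto
    qed
  qed (use indep in \<open>auto simp: I_def\<close>)
  have "(\<Sum>x\<in>I. measure_pmf.expectation ?P (X x)) = real n * mu D Dd i"
    using expectation_X card_I by simp
  moreover have "(\<Sum>x\<in>I. X x w) = (\<Sum>k<n. real (w (i, k)) / real D)" for w
    unfolding I_def X_def by (simp add: sum.reindex[OF inj])
  moreover have "measure_pmf.prob ?P {w \<in> space ?M.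
      \<epsilon> \<le> \<bar>(\<Sum>x\<in>I. X x w) - (\<Sum>x\<in>I. measure_pmf.expectation ?P (X x))\<bar>}
      \<le> 2 * exp (-2 * \<epsilon>\<^sup>2 / (\<Sum>x\<in>I. (1 - 0)\<^sup>2))"
    by (rule H.Hoeffding_ineq_abs_ge[OF \<epsilon>]) (use card_I n in simp)
  ultimately show ?thesis using card_I by simp
qed

lemma expectation_Pi_pmf_two_power_card_le:
  fixes E :: "'a \<Rightarrow> 'b set"
  assumes fin: "finite I"
  shows "measure_pmf.expectation (Pi_pmf I dflt p) (\<lambda>w. 2 ^ card {x \<in> I. w x \<in> E x} :: real)
    \<le> exp (\<Sum>x\<in>I. measure_pmf.prob (p x) (E x))"
proof -
  have two_power: "2 ^ card {x \<in> I. w x \<in> E x} = (\<Prod>x\<in>I. 1 + indicator (E x) (w x) :: real)" for w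
  proof -
    have "(\<Prod>x\<in>I. 1 + indicator (E x) (w x) :: real) = (\<Prod>x\<in>I. if w x \<in> E x then 2 else 1)"
      by (intro prod.cong) auto
    then show ?thesis using fin by (simp add: prod.If_cases Int_def)
  qed
  have "measure_pmf.expectation (Pi_pmf I dflt p) (\<lambda>w. \<Prod>x\<in>I. 1 + indicator (E x) (w x) :: real)
      = (\<Prod>x\<in>I. measure_pmf.expectation (p x) (\<lambda>v. 1 + indicator (E x) v))"
    by (rule expectation_prod_Pi_pmf)
      (use fin in \<open>auto intro!: measure_pmf.integrable_const_bound[where B=2] AE_pmfI\<close>)
  also have "\<dots> = (\<Prod>x\<in>I. 1 + measure_pmf.prob (p x) (E x))"
    by (subst Bochner_Integration.integral_add)
      (auto intro!: integrable_real_indicator simp: less_top[symmetric])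
  also have "\<dots> \<le> (\<Prod>x\<in>I. exp (measure_pmf.prob (p x) (E x)))"
    by (intro prod_mono) simp
  also have "\<dots> = exp (\<Sum>x\<in>I. measure_pmf.prob (p x) (E x))"
    by (simp add: exp_sum fin)
  finally show ?thesis
    unfolding two_power .
qed

text \<open>Markov's inequality for 2^N, using e \<le> 4.\<close>

lemma prob_Pi_pmf_card_gt:
  fixes E :: "'a \<Rightarrow> 'b set"
  assumes fin: "finite I" and m: "(\<Sum>x\<in>I. measure_pmf.prob (p x) (E x)) \<le> m"
  shows "measure_pmf.prob (Pi_pmf I dflt p) {w. 2 * m + a < real (card {x \<in> I. w x \<in> E x})}
    \<le> 2 powr (- a)"
proof -
  let ?P = "Pi_pmf I dflt p"
  define g where "g w = (2 ^ card {x \<in> I. w x \<in> E x} :: real)" for w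
  have m_nonneg: "0 \<le> m" by (rule order_trans[OF sum_nonneg m]) simp
  have "integrable (measure_pmf ?P) g"
    by (intro measure_pmf.integrable_const_bound[where B="2 ^ card I"] AE_pmfI)
      (simp_all add: g_def fin card_mono)
  then have "measure_pmf.prob ?P {w \<in> space ?P. 2 powr (2 * m + a) \<le> g w}
      \<le> measure_pmf.expectation ?P g / 2 powr (2 * m + a)"
    by (rule integral_Markov_inequality_measure[of _ _ UNIV]) (simp_all add: g_def)
  also have "\<dots> \<le> exp m / 2 powr (2 * m + a)"
    using order_trans[OF expectation_Pi_pmf_two_power_card_le[OF fin] exp_mono[OF m]]
    unfolding g_def by (simp add: divide_right_mono)
  also have "\<dots> \<le> 2 powr (- a)"
  proof -
    have "m \<le> m * (2 * ln 2)"
      using mult_left_mono[of 1 "2 * ln 2" m] m_nonneg ln2_ge_two_thirds by simp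
    then have "exp m \<le> 2 powr (2 * m)"
      by (simp add: powr_def)
    then show ?thesis
      by (simp add: powr_add powr_minus divide_simps)
  qed
  finally show ?thesis
    by (rule order_trans[rotated], intro measure_pmf.finite_measure_mono)
      (auto simp: g_def powr_realpow[symmetric] intro: powr_mono less_imp_le)
qed

lemma card_late_rounds_const_le:
  assumes "1 \<le> R"
  shows "real (card (late_rounds T r R (\<lambda>_. v))) \<le> real v / real R"
proof -
  let ?L = "late_rounds T r R (\<lambda>_. v)"
  have inj: "inj_on (\<lambda>k. r - Suc k) ?L"
    unfolding late_rounds_def by (intro inj_onI) auto
  have "(\<lambda>k. r - Suc k) ` ?L \<subseteq> {1..v div R}"
  proof
    fix j assume "j \<in> (\<lambda>k. r - Suc k) ` ?L"
    then have "1 \<le> j" and "j * R \<le> v" unfolding late_rounds_def by auto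
    then show "j \<in> {1..v div R}"
      using assms div_le_mono[of "j * R" v R] by simp
  qed
  then have "card ((\<lambda>k. r - Suc k) ` ?L) \<le> card {1..v div R}"
    by (rule card_mono[rotated]) simp
  then have "card ?L \<le> v div R"
    using card_image[OF inj] by simp
  then have "real (card ?L) \<le> real (v div R)" by simp
  also have "\<dots> \<le> real v / real R" by (rule of_nat_div_le_of_nat)
  finally show ?thesis .
qed

lemma expectation_card_late_rounds_le:
  assumes "1 \<le> D" and supp: "set_pmf (Dd i) \<subseteq> {0..D}" and "1 \<le> R"
  shows "measure_pmf.expectation (Dd i) (\<lambda>v. real (card (late_rounds T r R (\<lambda>_. v))))
    \<le> dmean D Dd i / real R"
proof -
  have integrable: "integrable (measure_pmf (Dd i)) f" for f :: "nat \<Rightarrow> real"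
    by (rule integrable_measure_pmf_finite[OF finite_subset[OF supp finite_atLeastAtMost]])
  have "measure_pmf.expectation (Dd i) (\<lambda>v. real (card (late_rounds T r R (\<lambda>_. v))))
      \<le> measure_pmf.expectation (Dd i) (\<lambda>v. real v / real R)"
    using assms(3) by (intro integral_mono integrable card_late_rounds_const_le)
  also have "\<dots> = dmean D Dd i / real R"
    using assms(1) unfolding dmean_def mu_def by simp
  finally show ?thesis .
qed

lemma prob_late_rounds_gt:
  assumes i: "i < K" and D: "1 \<le> D" and supp: "set_pmf (Dd i) \<subseteq> {0..D}" and R: "1 \<le> R"
  shows "measure_pmf.prob (delay_space K T Dd)
     {w. 2 * dmean D Dd i / real R + a < real (card (late_rounds T r R (\<lambda>k. w (i, k))))}
     \<le> 2 powr (- a)"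
proof -
  let ?Dom = "{..<K} \<times> {..<T}"
  define E where "E x = (if fst x = i \<and> snd x + 2 \<le> r then {v. (r - Suc (snd x)) * R < v} else {})"
    for x :: "nat \<times> nat"
  have card_eq: "card {x \<in> ?Dom. u x \<in> E x} = card (late_rounds T r R (\<lambda>k. u (i, k)))" for u :: outcome
  proof -
    have "{x \<in> ?Dom. u x \<in> E x} = Pair i ` late_rounds T r R (\<lambda>k. u (i, k))"
      using i unfolding E_def late_rounds_def by (auto split: if_splits)
    then show ?thesis by (simp add: card_image inj_on_def)
  qed
  have integrable: "integrable (measure_pmf (Dd i)) f" for f :: "nat \<Rightarrow> real"
    by (rule integrable_measure_pmf_finite[OF finite_subset[OF supp finite_atLeastAtMost]])
  have "(\<Sum>x\<in>?Dom. measure_pmf.prob ((\<lambda>(i, k). Dd i) x) (E x))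
      = (\<Sum>x\<in>?Dom. measure_pmf.expectation (Dd i) (indicator (E x)))"
    by (intro sum.cong) (auto simp: E_def)
  also have "\<dots> = measure_pmf.expectation (Dd i) (\<lambda>v. \<Sum>x\<in>?Dom. indicator (E x) v)"
    by (rule Bochner_Integration.integral_sum[symmetric]) (rule integrable)
  also have "\<dots> = measure_pmf.expectation (Dd i) (\<lambda>v. real (card (late_rounds T r R (\<lambda>_. v))))"
  proof (intro Bochner_Integration.integral_cong refl)
    fix v
    have "(\<Sum>x\<in>?Dom. indicator (E x) v) = (\<Sum>x\<in>?Dom. of_bool (v \<in> E x) :: real)"
      by (simp add: indicator_def)
    also have "\<dots> = real (card {x \<in> ?Dom. v \<in> E x})"
      by (simp add: Int_def)
    finally show "(\<Sum>x\<in>?Dom. indicator (E x) v) = real (card (late_rounds T r R (\<lambda>_. v)))"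
      using card_eq[of "\<lambda>_. v"] by simp
  qed
  also have "\<dots> \<le> dmean D Dd i / real R"
    using D supp R by (rule expectation_card_late_rounds_le)
  finally have "measure_pmf.prob (Pi_pmf ?Dom 0 (\<lambda>(i, k). Dd i))
      {w. 2 * (dmean D Dd i / real R) + a < real (card {x \<in> ?Dom. w x \<in> E x})} \<le> 2 powr (- a)"
    by (intro prob_Pi_pmf_card_gt) simp
  then show ?thesis
    unfolding delay_space_def card_eq by simp
qed

lemma exp_confidence_radius_eq:
  assumes "1 \<le> T" and "1 \<le> n"
  shows "2 * exp (-2 * (real n * sqrt (2 * ln (real T) / real n))\<^sup>2 / real n) = 2 / real T ^ 4"
proof -
  have "-2 * (real n * sqrt (2 * ln (real T) / real n))\<^sup>2 / real n = ln (real T) * (-4)"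
    using assms by (simp add: power_mult_distrib power2_eq_square field_simps)
  moreover have "exp (ln (real T) * (-4)) = real T powr (-4)"
    using assms by (simp add: powr_def mult.commute)
  moreover have "real T powr (-4) = 1 / real T ^ 4"
    using assms by (simp add: powr_minus_divide powr_numeral)
  ultimately show ?thesis by simp
qed

lemma two_powr_neg_16_ln_le:
  assumes "1 \<le> T"
  shows "2 powr (- (16 * ln (real T))) \<le> 1 / real T ^ 5"
proof -
  have "ln (real T) * 5 \<le> ln (real T) * (16 * ln 2)"
    using assms ln2_ge_two_thirds by (intro mult_left_mono) auto
  then have "2 powr (- (16 * ln (real T))) \<le> exp (ln (real T) * (-5))"
    by (simp add: powr_def)
  also have "\<dots> = real T powr (-5)"
    using assms by (simp add: powr_def mult.commute)
  also have "\<dots> = 1 / real T ^ 5"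
    using assms by (simp add: powr_minus_divide powr_numeral)
  finally show ?thesis .
qed

definition mean_deviation_event :: "nat \<Rightarrow> nat \<Rightarrow> (nat \<Rightarrow> nat pmf) \<Rightarrow> nat \<Rightarrow> nat \<Rightarrow> outcome set" where
  "mean_deviation_event T D Dd i n =
     {w. real n * sqrt (2 * ln (real T) / real n)
           \<le> \<bar>(\<Sum>k<n. real (w (i, k)) / real D) - real n * mu D Dd i\<bar>}"

definition many_late_rounds_event ::
  "nat \<Rightarrow> nat \<Rightarrow> (nat \<Rightarrow> nat pmf) \<Rightarrow> nat \<Rightarrow> nat \<Rightarrow> nat \<Rightarrow> outcome set" where
  "many_late_rounds_event T D Dd i r R =
     {w. 2 * dmean D Dd i / real R + 16 * ln (real T) < real (card (late_rounds T r R (\<lambda>k. w (i, k))))}"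

definition bad_event :: "nat \<Rightarrow> nat \<Rightarrow> (nat \<Rightarrow> nat pmf) \<Rightarrow> nat set \<Rightarrow> outcome set" where
  "bad_event T D Dd A =
     (\<Union>(i, n)\<in>A \<times> {1..T}. mean_deviation_event T D Dd i n) \<union>
     (\<Union>(i, r, R)\<in>A \<times> {..<T} \<times> {1..T}. many_late_rounds_event T D Dd i r R)"

lemma prob_mean_deviation_event_le:
  assumes "i < K" and n: "n \<in> {1..T}" and "set_pmf (Dd i) \<subseteq> {0..D}"
  shows "measure_pmf.prob (delay_space K T Dd) (mean_deviation_event T D Dd i n) \<le> 2 / real T ^ 4"
proof -
  have "measure_pmf.prob (delay_space K T Dd) (mean_deviation_event T D Dd i n)
      \<le> 2 * exp (-2 * (real n * sqrt (2 * ln (real T) / real n))\<^sup>2 / real n)"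
    unfolding mean_deviation_event_def using assms by (intro prob_delay_space_sample_sum_deviation) auto
  also have "\<dots> = 2 / real T ^ 4"
    using n by (intro exp_confidence_radius_eq) auto
  finally show ?thesis .
qed

lemma prob_many_late_rounds_event_le:
  assumes "i < K" and "1 \<le> D" and "set_pmf (Dd i) \<subseteq> {0..D}" and R: "R \<in> {1..T}"
  shows "measure_pmf.prob (delay_space K T Dd) (many_late_rounds_event T D Dd i r R) \<le> 1 / real T ^ 5"
proof -
  have "measure_pmf.prob (delay_space K T Dd) (many_late_rounds_event T D Dd i r R)
      \<le> 2 powr (- (16 * ln (real T)))"
    unfolding many_late_rounds_event_def using assms by (intro prob_late_rounds_gt) auto
  also have "\<dots> \<le> 1 / real T ^ 5"
    using R by (intro two_powr_neg_16_ln_le) auto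
  finally show ?thesis .
qed

lemma prob_bad_event_le:
  assumes A: "A \<subseteq> {..<K}" "card A \<le> T" and T: "1 \<le> T" and D: "1 \<le> D"
    and supp: "\<And>i. i < K \<Longrightarrow> set_pmf (Dd i) \<subseteq> {0..D}"
  shows "measure_pmf.prob (delay_space K T Dd) (bad_event T D Dd A) \<le> 3 / real T ^ 2"
proof -
  let ?P = "delay_space K T Dd"
  let ?I = "A \<times> {1..T}" and ?J = "A \<times> {..<T} \<times> {1..T}"
  define Dev where "Dev = (\<lambda>(i, n). mean_deviation_event T D Dd i n)"
  define Late where "Late = (\<lambda>(i, r, R). many_late_rounds_event T D Dd i r R)"
  have fin: "finite A" using A(1) finite_subset by blast
  have deviation: "measure_pmf.prob ?P (Dev x) \<le> 2 / real T ^ 4" if "x \<in> ?I" for x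
    using that A(1) supp by (auto simp: Dev_def intro!: prob_mean_deviation_event_le)
  have late: "measure_pmf.prob ?P (Late y) \<le> 1 / real T ^ 5" if "y \<in> ?J" for y
    using that A(1) D supp by (auto simp: Late_def intro!: prob_many_late_rounds_event_le)
  have "measure_pmf.prob ?P (bad_event T D Dd A)
      \<le> measure_pmf.prob ?P (\<Union>(Dev ` ?I)) + measure_pmf.prob ?P (\<Union>(Late ` ?J))"
    unfolding bad_event_def Dev_def Late_def by (rule measure_Un_le) auto
  also have "\<dots> \<le> (\<Sum>x\<in>?I. measure_pmf.prob ?P (Dev x)) + (\<Sum>y\<in>?J. measure_pmf.prob ?P (Late y))"
    using fin by (intro add_mono measure_pmf.finite_measure_subadditive_finite) auto
  also have "\<dots> \<le> real (card ?I) * (2 / real T ^ 4) + real (card ?J) * (1 / real T ^ 5)"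
    using deviation late by (intro add_mono sum_bounded_above) auto
  also have "\<dots> \<le> real T ^ 2 * (2 / real T ^ 4) + real T ^ 3 * (1 / real T ^ 5)"
  proof -
    have "card ?I \<le> T ^ 2" and "card ?J \<le> T ^ 3"
      using mult_le_mono1[OF A(2), of T] mult_le_mono1[OF A(2), of "T * T"]
      by (simp_all add: card_cartesian_product power2_eq_square power3_eq_cube mult.assoc)
    then show ?thesis
      by (intro add_mono mult_right_mono) (simp_all flip: of_nat_power)
  qed
  also have "\<dots> = 3 / real T ^ 2"
    using T by (simp add: field_simps)
  finally show ?thesis .
qed

lemma muhat_close_if_not_mean_deviation:
  assumes pos: "0 < cnt arm w t i" and "w \<notin> mean_deviation_event T D Dd i (cnt arm w t i)"
  shows "\<bar>mu D Dd i - muhat D arm w t i\<bar> \<le> sqrt (2 * ln (real T) / real (cnt arm w t i))"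
proof -
  let ?n = "cnt arm w t i"
  let ?X = "(\<Sum>k<?n. real (w (i, k)) / real D) - real ?n * mu D Dd i"
  have "\<bar>?X\<bar> < real ?n * sqrt (2 * ln (real T) / real ?n)"
    using assms(2) unfolding mean_deviation_event_def by simp
  then have "\<bar>?X\<bar> / real ?n < sqrt (2 * ln (real T) / real ?n)"
    using pos by (simp add: divide_less_eq mult.commute)
  moreover have "mu D Dd i - muhat D arm w t i = - (?X / real ?n)"
    using pos unfolding muhat_eq_mean_of_first_samples by (simp add: field_simps)
  ultimately show ?thesis
    by (simp add: abs_divide)
qed

lemma measure_pmf_prob_ge_one_minus:
  assumes "set_pmf p - B \<subseteq> G"
  shows "1 - measure_pmf.prob p B \<le> measure_pmf.prob p G"
proof -
  have "measure_pmf.prob p (UNIV - B) \<le> measure_pmf.prob p G"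
    using assms by (intro measure_pmf.finite_measure_mono_AE) (auto simp: AE_measure_pmf_iff)
  then show ?thesis
    using measure_pmf.prob_compl[of B p] by simp
qed

context round_robin_policy
begin

lemma mcnt_le_if_not_many_late_rounds:
  assumes "t \<in> {1..T}"
    and "w \<notin> many_late_rounds_event T D Dd i (round_of bnd w t) (Rmin act bnd w t)"
  shows "real (mcnt arm w t i) \<le> 2 * dmean D Dd i / real (Rmin act bnd w t) + 16 * ln (real T) + 2"
  using mcnt_le_late_rounds[OF assms(1), of w i] assms(2)
  unfolding many_late_rounds_event_def by simp

lemma good_event_outside_bad_event:
  assumes "1 \<le> T" and "card (act w 0) \<le> T" and "w \<notin> bad_event T D Dd (act w 0)"
  shows "w \<in> good_event K T D Dd arm act bnd"
  unfolding good_event_def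
proof (intro CollectI ballI allI impI conjI)
  fix t i assume t: "t \<in> {1..T}" and "i < K"
  have bound_nonneg: "0 \<le> 2 * dmean D Dd i / real (Rmin act bnd w t) + 16 * ln (real T)"
    using assms(1) mu_nonneg[of D Dd i] unfolding dmean_def by simp
  show "real (mcnt arm w t i) \<le> 2 * dmean D Dd i / real (Rmin act bnd w t) + 16 * ln (real T) + 2"
  proof (cases "i \<in> act w 0")
    case False
    then show ?thesis using mcnt_eq_0_if_not_in_act_0[of t i w] t bound_nonneg by simp
  next
    case True
    have "round_of bnd w t < T" using round_of_less[of t w] t by simp
    moreover have "Rmin act bnd w t \<in> {1..T}"
      using Rmin_pos[of t w] Rmin_le_card_act[of w 0 t] bnd_0[of w] t assms(2) by auto
    ultimately have "w \<notin> many_late_rounds_event T D Dd i (round_of bnd w t) (Rmin act bnd w t)"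
      using True assms(3) unfolding bad_event_def by blast
    then show ?thesis using t by (rule mcnt_le_if_not_many_late_rounds[rotated])
  qed
next
  fix t i assume t: "t \<in> {1..T}" and "i < K" and pos: "0 < cnt arm w t i"
  have "cnt arm w t i \<le> t"
    unfolding cnt_def by (rule order_trans[OF card_mono[of "{1..t}"]]) auto
  moreover have "i \<in> act w 0" using in_act_0_if_cnt_pos[of t w i] t pos by simp
  ultimately have "w \<notin> mean_deviation_event T D Dd i (cnt arm w t i)"
    using assms(3) pos t unfolding bad_event_def by auto
  then show "\<bar>mu D Dd i - muhat D arm w t i\<bar> \<le> sqrt (2 * ln (real T) / real (cnt arm w t i))"
    using pos by (rule muhat_close_if_not_mean_deviation[rotated])
qed

text \<open>With at least T active arms the horizon ends within the first round, so every arm is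
  played at most once and no play is older than the current round.\<close>

lemma good_event_if_single_round:
  assumes "2 \<le> T" and "T \<le> card (act w 0)" and "1 \<le> D"
    and w: "w \<in> set_pmf (delay_space K T Dd)"
    and supp: "\<And>i. i < K \<Longrightarrow> set_pmf (Dd i) \<subseteq> {0..D}"
  shows "w \<in> good_event K T D Dd arm act bnd"
  unfolding good_event_def
proof (intro CollectI ballI allI impI conjI)
  fix t i assume t: "t \<in> {1..T}" and "i < K"
  have "mcnt arm w t i \<le> 2"
    using mcnt_le_late_rounds[OF t, of w i] round_of_eq_0_if_horizon_le_card_act_0[OF assms(2) t]
    by (simp add: late_rounds_def)
  moreover have "0 \<le> 2 * dmean D Dd i / real (Rmin act bnd w t) + 16 * ln (real T)"
    using assms(1) mu_nonneg[of D Dd i] unfolding dmean_def by simp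
  ultimately show "real (mcnt arm w t i) \<le> 2 * dmean D Dd i / real (Rmin act bnd w t) + 16 * ln (real T) + 2"
    by linarith
next
  fix t i assume t: "t \<in> {1..T}" and i: "i < K" and pos: "0 < cnt arm w t i"
  then have once: "cnt arm w t i = 1"
    using cnt_le_1_if_horizon_le_card_act_0[OF assms(2), of t i] by simp
  have "w (i, 0) \<in> set_pmf (Dd i)"
    using delay_space_sample_in_support[OF w i, of 0] assms(1) by simp
  then have "real (w (i, 0)) \<le> real D"
    using supp[OF i] by auto
  then have "real (w (i, 0)) / real D \<le> 1"
    using assms(3) by (simp add: divide_le_eq)
  moreover have "0 \<le> real (w (i, 0)) / real D" by simp
  moreover have "muhat D arm w t i = real (w (i, 0)) / real D"
    unfolding muhat_eq_mean_of_first_samples once by simp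
  ultimately have "\<bar>mu D Dd i - muhat D arm w t i\<bar> \<le> 1"
    using mu_nonneg[of D Dd i] mu_le_1[of Dd i D, OF supp[OF i]] unfolding abs_le_iff by linarith
  also have "1 \<le> sqrt (2 * ln (real T) / real (cnt arm w t i))"
  proof -
    have "ln 2 \<le> ln (real T)" using assms(1) by simp
    then show ?thesis using ln2_ge_two_thirds unfolding once by simp
  qed
  finally show "\<bar>mu D Dd i - muhat D arm w t i\<bar> \<le> sqrt (2 * ln (real T) / real (cnt arm w t i))" .
qed

lemma prob_good_event_if_single_round:
  assumes "2 \<le> T" and "\<And>w. T \<le> card (act w 0)" and "1 \<le> D"
    and supp: "\<And>i. i < K \<Longrightarrow> set_pmf (Dd i) \<subseteq> {0..D}"
  shows "measure_pmf.prob (delay_space K T Dd) (good_event K T D Dd arm act bnd) = 1"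
proof -
  have "set_pmf (delay_space K T Dd) - {} \<subseteq> good_event K T D Dd arm act bnd"
  proof
    fix w assume "w \<in> set_pmf (delay_space K T Dd) - {}"
    then show "w \<in> good_event K T D Dd arm act bnd"
      using good_event_if_single_round[where Dd = Dd, OF assms(1,2,3) _ supp] by blast
  qed
  then have "1 - measure_pmf.prob (delay_space K T Dd) {}
      \<le> measure_pmf.prob (delay_space K T Dd) (good_event K T D Dd arm act bnd)"
    by (rule measure_pmf_prob_ge_one_minus)
  then show ?thesis
    using measure_pmf.prob_le_1 by (simp add: antisym)
qed

lemma prob_good_event_ge_if_few_arms:
  assumes "1 \<le> T" and act_0: "\<And>w. act w 0 = A" and "card A \<le> T" and "1 \<le> D"
    and supp: "\<And>i. i < K \<Longrightarrow> set_pmf (Dd i) \<subseteq> {0..D}"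
  shows "1 - 3 / real T ^ 2 \<le> measure_pmf.prob (delay_space K T Dd) (good_event K T D Dd arm act bnd)"
proof -
  have "set_pmf (delay_space K T Dd) - bad_event T D Dd A \<subseteq> good_event K T D Dd arm act bnd"
  proof
    fix w assume "w \<in> set_pmf (delay_space K T Dd) - bad_event T D Dd A"
    then show "w \<in> good_event K T D Dd arm act bnd"
      using good_event_outside_bad_event[OF assms(1), of w D Dd] act_0[of w] assms(3) by simp
  qed
  then have "1 - measure_pmf.prob (delay_space K T Dd) (bad_event T D Dd A)
      \<le> measure_pmf.prob (delay_space K T Dd) (good_event K T D Dd arm act bnd)"
    by (rule measure_pmf_prob_ge_one_minus)
  moreover have "A \<subseteq> {..<K}"
    using act_0_subset act_0 by blast
  then have "measure_pmf.prob (delay_space K T Dd) (bad_event T D Dd A) \<le> 3 / real T ^ 2"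
    using assms(3,1,4) supp by (rule prob_bad_event_le)
  ultimately show ?thesis by simp
qed

end

theorem lemma2:
  fixes K T D :: nat
    and Dd :: "nat \<Rightarrow> nat pmf"
    and arm :: "outcome \<Rightarrow> nat \<Rightarrow> nat"
    and act :: "outcome \<Rightarrow> nat \<Rightarrow> nat set"
    and bnd :: "outcome \<Rightarrow> nat \<Rightarrow> nat"
  assumes "K \<ge> 1" and "T \<ge> 1" and "D \<ge> 1"
    and "\<And>i. i < K \<Longrightarrow> set_pmf (Dd i) \<subseteq> {0..D}"
    and "round_robin K T arm act bnd"
  shows "measure_pmf.prob (delay_space K T Dd) (good_event K T D Dd arm act bnd)
           \<ge> 1 - 3 / (real T)^2"
proof -
  interpret round_robin_policy K T arm act bnd
    by unfold_locales (rule assms(5))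
  define A where "A = act (\<lambda>_. 0) 0"
  have act_0: "act w 0 = A" for w
    unfolding A_def using assms(2) by (rule act_0_eq)
  consider "T = 1" | "2 \<le> T" "T \<le> card A" | "card A \<le> T"
    using assms(2) by linarith
  then show ?thesis
  proof cases
    case 1
    then have "1 - 3 / (real T)^2 \<le> 0" by simp
    then show ?thesis
      using measure_nonneg[of "measure_pmf (delay_space K T Dd)" "good_event K T D Dd arm act bnd"]
      by linarith
  next
    case 2
    then show ?thesis
      using prob_good_event_if_single_round[of D Dd] act_0 assms(3,4) by simp
  next
    case 3
    then show ?thesis
      using prob_good_event_ge_if_few_arms[OF assms(2) act_0 3 assms(3,4)] by simp
  qed
qed

end
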